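(* Let $r \in \mathbb{Q}_{>0}$ be such that $S_r$ is atomic. Then for every $k \in \mathbb{N}$, $\mathcal{U}_k(S_r)$ is an arithmetic progression containing $k$ with difference $|\mathsf{n}(r) - \mathsf{d}(r)|$. More precisely: (1) If $r < 1$, then $\mathcal{U}_k(S_r) = \{k\}$ if $k < \mathsf{n}(r)$; $\mathcal{U}_k(S_r) = \{k + j(\mathsf{d}(r) - \mathsf{n}(r)) : j \in \mathbb{N}_0\}$ if $\mathsf{n}(r) \le k < \mathsf{d}(r)$; and $\mathcal{U}_k(S_r) = \{k + j(\mathsf{d}(r) - \mathsf{n}(r)) : j \in \mathbb{Z}, j \ge \ell\}$ for some negative integer $\ell$ if $k \ge \mathsf{d}(r)$. (2) If $r \in \mathbb{Q}_{>1} \setminus \mathbb{N}$, then $\mathcal{U}_k(S_r) = \{k\}$ if $k < \mathsf{d}(r)$; $\mathcal{U}_k(S_r) = \{k + j(\mathsf{n}(r) - \mathsf{d}(r)) : j \in \mathbb{N}_0\}$ if $\mathsf{d}(r) \le k < \mathsf{n}(r)$; and $\mathcal{U}_k(S_r) = \{k + j(\mathsf{n}(r) - \mathsf{d}(r)) : j \in \mathbb{Z}, j \ge \ell\}$ for some negative integer $\ell$ if $k \ge \mathsf{n}(r)$. (3) If $r \in \mathbb{N}$, then $\mathcal{U}_k(S_r) = \{k\}$ for every $k \in \mathbb{N}$.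
   Context: For $q \in \mathbb{Q}_{>0}$, $\mathsf{n}(q),\mathsf{d}(q)$ are the positive coprime integers with $q = \mathsf{n}(q)/\mathsf{d}(q)$. $S_r$ is the additive submonoid of $(\mathbb{Q}_{\ge 0},+)$ generated by $\{r^n : n \in \mathbb{N}_0\}$; it is atomic exactly when $r=1$ or $\mathsf{n}(r)>1$ (then for $r \notin \mathbb{N}$ its atoms are the $r^n$, $n\in\mathbb{N}_0$; for $r \in \mathbb{N}$, $S_r=\mathbb{N}_0$). $\mathsf{L}(x)$ denotes the set of lengths of factorizations of $x$ into atoms. For $k \in \mathbb{N}$, $\mathcal{U}_k(S_r)$ is the set of $\ell \in \mathbb{N}$ for which there exist atoms $a_1,\dots,a_k,b_1,\dots,b_\ell$ with $a_1+\dots+a_k = b_1 + \dots + b_\ell$; equivalently, the union of all sets $\mathsf{L}(x)$, $x \in S_r$, containing $k$. *)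

theory Defs
  imports Complex_Main
begin

definition numr :: "rat \<Rightarrow> int" where "numr q = fst (quotient_of q)"
definition denr :: "rat \<Rightarrow> int" where "denr q = snd (quotient_of q)"

inductive_set S :: "rat \<Rightarrow> rat set" for r :: rat where
  zero: "0 \<in> S r"
| step: "x \<in> S r \<Longrightarrow> x + r ^ n \<in> S r"

text \<open>atoms of an additive submonoid M of Q_{>=0} (its only unit is 0)\<close>
definition atoms :: "rat set \<Rightarrow> rat set" where
  "atoms M = {a \<in> M. a \<noteq> 0 \<and> (\<forall>b\<in>M. \<forall>c\<in>M. a = b + c \<longrightarrow> b = 0 \<or> c = 0)}"

definition atomic :: "rat set \<Rightarrow> bool" where
  "atomic M \<longleftrightarrow> (\<forall>x\<in>M. x \<noteq> 0 \<longrightarrow> (\<exists>as. as \<noteq> [] \<and> set as \<subseteq> atoms M \<and> sum_list as = x))"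

definition U :: "nat \<Rightarrow> rat set \<Rightarrow> nat set" where
  "U k M = {l. l \<ge> 1 \<and> (\<exists>as bs. length as = k \<and> length bs = l \<and> set as \<subseteq> atoms M
              \<and> set bs \<subseteq> atoms M \<and> sum_list as = sum_list bs)}"

end

theory Submission
  imports Defs
begin

text \<open>
Write an element of \<open>S\<^sub>r\<close> through the multiplicities \<open>c\<^sub>i\<close> of the atoms \<open>r\<^sup>i\<close> in one of
its factorizations, so that its value is \<open>\<Sum> c\<^sub>i r\<^sup>i\<close> and the length of the factorization is
\<open>\<Sum> c\<^sub>i\<close>. With \<open>r = n/d\<close> in lowest terms, the relation \<open>d r = n\<close> lets one trade \<open>n\<close> copies of
\<open>r\<^sup>i\<close> for \<open>d\<close> copies of \<open>r\<^sup>i\<^sup>+\<^sup>1\<close>, changing the length by \<open>n - d\<close>; conversely, clearing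
denominators shows that two factorizations of the same element have lengths congruent
modulo \<open>n - d\<close>. If all multiplicities are below \<open>min n d\<close> no trade is possible and the
factorization is unique; if they are below \<open>max n d\<close> it has minimal length. Reversing coefficient lists shows that \<open>S\<^sub>r\<close> and \<open>S\<^sub>1\<^sub>/\<^sub>r\<close> have
the same sets \<open>\<U>\<^sub>k\<close>, so it suffices to treat \<open>r > 1\<close>.
\<close>

section \<open>Coefficient lists\<close>

text \<open>\<open>horner r cs\<close> is the element with \<open>cs ! i\<close> copies of the atom \<open>r ^ i\<close>.\<close>

fun horner :: "rat \<Rightarrow> nat list \<Rightarrow> rat" where
  "horner r [] = 0"
| "horner r (c # cs) = of_nat c + r * horner r cs"

lemma horner_append: "horner r (xs @ ys) = horner r xs + r ^ length xs * horner r ys"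
  by (induction xs) (auto simp: algebra_simps)

lemma horner_replicate_0 [simp]: "horner r (replicate m 0) = 0"
  by (induction m) auto

lemma horner_append_zeros: "horner r (xs @ replicate m 0) = horner r xs"
  by (simp add: horner_append)

lemma horner_shift: "horner r (replicate m 0 @ cs) = r ^ m * horner r cs"
  by (simp add: horner_append)

lemma horner_nonneg: "r \<ge> 0 \<Longrightarrow> horner r cs \<ge> 0"
  by (induction cs) auto

lemma horner_eq_0_iff:
  assumes "r > 0"
  shows "horner r cs = 0 \<longleftrightarrow> sum_list cs = 0"
proof (induction cs)
  case (Cons c cs)
  have "horner r cs \<ge> 0"
    using assms by (simp add: horner_nonneg)
  with assms Cons.IH show ?case
    by (auto simp: add_nonneg_eq_0_iff)
qed simp

lemma horner_rev: "horner (inverse r) (rev xs) * r ^ length xs = r * horner r xs"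
proof (induction xs)
  case (Cons x xs)
  show ?case
  proof (cases "r = 0")
    case False
    have "horner (inverse r) (rev (x # xs)) * r ^ length (x # xs)
        = r * (horner (inverse r) (rev xs) * r ^ length xs)
          + of_nat x * (inverse r ^ length xs * r ^ length xs) * r"
      by (simp add: horner_append algebra_simps)
    also have "\<dots> = r * (r * horner r xs) + of_nat x * r"
      using Cons False by (simp add: power_mult_distrib[symmetric])
    finally show ?thesis
      by (simp add: algebra_simps)
  qed simp
qed simp

fun add_atom :: "nat \<Rightarrow> nat list \<Rightarrow> nat list" where
  "add_atom 0 [] = [1]"
| "add_atom 0 (c # cs) = Suc c # cs"
| "add_atom (Suc e) [] = 0 # add_atom e []"
| "add_atom (Suc e) (c # cs) = c # add_atom e cs"

lemma horner_add_atom: "horner r (add_atom e cs) = horner r cs + r ^ e"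
  by (induction e cs rule: add_atom.induct) (auto simp: algebra_simps)

lemma sum_list_add_atom: "sum_list (add_atom e cs) = Suc (sum_list cs)"
  by (induction e cs rule: add_atom.induct) auto

fun exponents :: "nat list \<Rightarrow> nat list" where
  "exponents [] = []"
| "exponents (c # cs) = replicate c 0 @ map Suc (exponents cs)"

lemma length_exponents: "length (exponents cs) = sum_list cs"
  by (induction cs) auto

lemma sum_list_power_exponents: "sum_list (map ((^) r) (exponents cs)) = horner r cs"
proof (induction cs)
  case (Cons c cs)
  have "sum_list (map ((^) r) (map Suc (exponents cs))) = r * sum_list (map ((^) r) (exponents cs))"
    by (simp add: o_def sum_list_const_mult[symmetric])
  with Cons show ?case
    by (simp add: sum_list_replicate)
qed simp

lemma ex_coeffs_of_exponents:
  "\<exists>cs. horner r cs = sum_list (map ((^) r) es) \<and> sum_list cs = length es"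
proof (induction es)
  case Nil
  show ?case
    by (intro exI[of _ "[]"]) simp
next
  case (Cons e es)
  then obtain cs where "horner r cs = sum_list (map ((^) r) es)" "sum_list cs = length es"
    by blast
  then show ?case
    by (intro exI[of _ "add_atom e cs"]) (simp add: horner_add_atom sum_list_add_atom)
qed

section \<open>The monoid and its atoms\<close>

lemma S_eq_range_horner: "S r = range (horner r)"
proof (intro set_eqI iffI)
  fix x assume "x \<in> S r"
  then show "x \<in> range (horner r)"
  proof (induction rule: S.induct)
    case zero
    show ?case
      by (metis horner.simps(1) rangeI)
  next
    case (step x e)
    then obtain cs where "x = horner r cs"
      by blast
    then show ?case
      by (metis horner_add_atom rangeI)
  qed
next
  have "sum_list (map ((^) r) es) \<in> S r" for es
  proof (induction es)
    case (Cons e es)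
    then show ?case
      using S.step[OF Cons, of e] by (simp add: add.commute)
  qed (simp add: S.zero)
  then show "x \<in> S r" if "x \<in> range (horner r)" for x
    using that by (metis imageE sum_list_power_exponents)
qed

lemma power_in_S: "r ^ e \<in> S r"
  using S.step[OF S.zero] by simp

lemma of_nat_in_S: "of_nat j \<in> S r"
proof (induction j)
  case (Suc j)
  then show ?case
    using S.step[of "of_nat j" r 0] by (simp add: add.commute)
qed (simp add: S.zero)

lemma atoms_S_subset_powers:
  assumes "r > 0"
  shows "atoms (S r) \<subseteq> range ((^) r)"
proof
  fix a assume a: "a \<in> atoms (S r)"
  then have "a \<in> S r" "a \<noteq> 0"
    by (auto simp: atoms_def)
  then show "a \<in> range ((^) r)"
  proof (cases rule: S.cases)
    case (step x e)
    then have "x = 0"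
      using a power_in_S[of r e] assms by (auto simp: atoms_def)
    with step show ?thesis
      by simp
  qed simp
qed

lemma not_atomic_S_unit_fraction:
  assumes "2 \<le> d"
  shows "\<not> atomic (S (1 / of_nat d))"
proof -
  define r :: rat where "r = 1 / of_nat d"
  have atoms: "atoms (S r) = {}"
  proof (rule ccontr)
    assume "atoms (S r) \<noteq> {}"
    then obtain a where a: "a \<in> atoms (S r)"
      by blast
    then have indecomposable: "\<forall>b\<in>S r. \<forall>c\<in>S r. a = b + c \<longrightarrow> b = 0 \<or> c = 0"
      by (simp add: atoms_def)
    have "r > 0"
      using assms by (simp add: r_def)
    with a obtain m where "a = r ^ m"
      using atoms_S_subset_powers by blast
    then have "a = r ^ Suc m * of_nat d"
      using assms by (simp add: r_def)
    then have "a = r ^ Suc m + horner r (replicate (Suc m) 0 @ [d - 1])"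
      using assms by (simp add: horner_shift of_nat_diff algebra_simps)
    moreover have "horner r (replicate (Suc m) 0 @ [d - 1]) \<noteq> 0"
      using assms \<open>r > 0\<close> by (simp add: horner_shift)
    moreover have "horner r (replicate (Suc m) 0 @ [d - 1]) \<in> S r"
      unfolding S_eq_range_horner by (rule rangeI)
    ultimately show False
      using indecomposable power_in_S[of r "Suc m"] \<open>r > 0\<close> by auto
  qed
  have "(1::rat) \<in> S r"
    using of_nat_in_S[of 1 r] by simp
  with atoms show ?thesis
    unfolding atomic_def r_def[symmetric] by fastforce
qed

lemma horner_in_Nats: "r \<in> \<nat> \<Longrightarrow> horner r cs \<in> \<nat>"
  by (induction cs) (auto intro: Nats_add Nats_mult)

lemma atoms_S_Nats:
  assumes "r \<in> \<nat>"
  shows "atoms (S r) = {1}"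
proof (intro equalityI subsetI)
  fix a assume "a \<in> atoms (S r)"
  then have a: "a \<in> S r" "a \<noteq> 0" "\<forall>b\<in>S r. \<forall>c\<in>S r. a = b + c \<longrightarrow> b = 0 \<or> c = 0"
    by (simp_all add: atoms_def)
  have "a \<in> \<nat>"
    using a(1) horner_in_Nats[OF assms] unfolding S_eq_range_horner by blast
  then obtain p where p: "a = 1 + of_nat p"
    using a(2) by (metis Nats_cases add.commute not0_implies_Suc of_nat_0 of_nat_Suc)
  have "(1::rat) \<in> S r"
    using of_nat_in_S[of 1 r] by simp
  then have "(1::rat) = 0 \<or> of_nat p = (0::rat)"
    by (rule a(3)[rule_format, OF _ of_nat_in_S p])
  with p show "a \<in> {1}"
    by simp
next
  fix a assume "a \<in> {1::rat}"
  moreover have "b = 0 \<or> c = 0" if bc: "b \<in> S r" "c \<in> S r" "1 = b + c" for b c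
  proof -
    obtain cs1 cs2 where "b = horner r cs1" "c = horner r cs2"
      using bc(1,2) by (auto simp: S_eq_range_horner)
    then have "b \<in> \<nat>" "c \<in> \<nat>"
      using horner_in_Nats[OF assms] by simp_all
    then obtain p q where pq: "b = of_nat p" "c = of_nat q"
      by (elim Nats_cases)
    then have "of_nat (p + q) = (of_nat 1 :: rat)"
      using bc(3) by simp
    then have "p + q = 1"
      by (simp only: of_nat_eq_iff)
    with pq show ?thesis
      by auto
  qed
  ultimately show "a \<in> atoms (S r)"
    using of_nat_in_S[of 1 r] by (auto simp: atoms_def)
qed

lemma U_S_Nats:
  assumes "r \<in> \<nat>" "k \<ge> 1"
  shows "U k (S r) = {k}"
proof (intro equalityI subsetI)
  have sum_ones: "sum_list xs = of_nat (length xs)" if "set xs \<subseteq> {1::rat}" for xs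
    using that by (induction xs) auto
  fix l assume "l \<in> U k (S r)"
  then obtain as bs :: "rat list" where "length as = k" "length bs = l"
    "set as \<subseteq> {1}" "set bs \<subseteq> {1}" "sum_list as = sum_list bs"
    unfolding U_def atoms_S_Nats[OF assms(1)] by blast
  then have "(of_nat k :: rat) = of_nat l"
    using sum_ones by metis
  then show "l \<in> {k}"
    by simp
next
  fix l assume "l \<in> {k}"
  then show "l \<in> U k (S r)"
    unfolding U_def atoms_S_Nats[OF assms(1)] using assms(2)
    by (intro CollectI conjI exI[of _ "replicate k (1::rat)"]) simp_all
qed

section \<open>Factorization lengths\<close>

definition lengths :: "rat \<Rightarrow> nat \<Rightarrow> nat set" where
  "lengths r k = {l. \<exists>cs ds. sum_list cs = k \<and> sum_list ds = l \<and> horner r cs = horner r ds}"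

lemma self_in_lengths: "k \<in> lengths r k"
  unfolding lengths_def by (intro CollectI exI[of _ "[k]"]) simp

lemma U_eq_lengths:
  assumes "r > 0" "atoms (S r) = range ((^) r)" "k \<ge> 1"
  shows "U k (S r) = lengths r k"
proof (intro set_eqI iffI)
  fix l assume "l \<in> U k (S r)"
  then obtain as bs where ab: "length as = k" "length bs = l" "set as \<subseteq> range ((^) r)"
    "set bs \<subseteq> range ((^) r)" "sum_list as = sum_list bs"
    unfolding U_def assms(2) by blast
  obtain es fs where "as = map ((^) r) es" "bs = map ((^) r) fs"
    using ab(3,4) ex_map_conv[of as "(^) r"] ex_map_conv[of bs "(^) r"] by auto
  moreover obtain cs where "horner r cs = sum_list (map ((^) r) es)" "sum_list cs = length es"
    using ex_coeffs_of_exponents by blast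
  moreover obtain ds where "horner r ds = sum_list (map ((^) r) fs)" "sum_list ds = length fs"
    using ex_coeffs_of_exponents by blast
  ultimately show "l \<in> lengths r k"
    using ab unfolding lengths_def by (intro CollectI exI[of _ cs] exI[of _ ds]) simp
next
  fix l assume "l \<in> lengths r k"
  then obtain cs ds where h: "sum_list cs = k" "sum_list ds = l" "horner r cs = horner r ds"
    by (auto simp: lengths_def)
  have "sum_list cs \<noteq> 0"
    using h(1) assms(3) by simp
  then have "sum_list ds \<noteq> 0"
    using h(3) horner_eq_0_iff[OF assms(1)] by metis
  then have "l \<ge> 1"
    using h(2) by simp
  moreover have "set (map ((^) r) (exponents xs)) \<subseteq> atoms (S r)" for xs
    using assms(2) by auto
  ultimately show "l \<in> U k (S r)"
    using h unfolding U_def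
    by (intro CollectI conjI exI[of _ "map ((^) r) (exponents cs)"]
        exI[of _ "map ((^) r) (exponents ds)"])
       (simp_all add: length_exponents sum_list_power_exponents)
qed

lemma lengths_subset_inverse:
  assumes "r \<noteq> 0"
  shows "lengths r k \<subseteq> lengths (inverse r) k"
proof
  fix l assume "l \<in> lengths r k"
  then obtain cs ds where h: "sum_list cs = k" "sum_list ds = l" "horner r cs = horner r ds"
    by (auto simp: lengths_def)
  define L where "L = max (length cs) (length ds)"
  define cs' where "cs' = cs @ replicate (L - length cs) 0"
  define ds' where "ds' = ds @ replicate (L - length ds) 0"
  have "length cs' = L" "length ds' = L"
    by (auto simp: cs'_def ds'_def L_def)
  moreover have "horner r cs' = horner r ds'"
    using h(3) by (simp add: cs'_def ds'_def horner_append_zeros)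
  ultimately have "horner (inverse r) (rev cs') * r ^ L = horner (inverse r) (rev ds') * r ^ L"
    using horner_rev[of r cs'] horner_rev[of r ds'] by simp
  then have "horner (inverse r) (rev cs') = horner (inverse r) (rev ds')"
    using assms by simp
  moreover have "sum_list (rev cs') = k" "sum_list (rev ds') = l"
    using h by (simp_all add: cs'_def ds'_def)
  ultimately show "l \<in> lengths (inverse r) k"
    unfolding lengths_def by (intro CollectI exI[of _ "rev cs'"] exI[of _ "rev ds'"]) simp
qed

lemma lengths_inverse: "r \<noteq> 0 \<Longrightarrow> lengths (inverse r) k = lengths r k"
  using lengths_subset_inverse[of r k] lengths_subset_inverse[of "inverse r" k] by simp

section \<open>Arithmetic progressions\<close>

lemma int_image_eq_progression:
  fixes V :: "nat set"
  assumes "\<forall>l\<in>V. int g dvd (int l - int k)" "\<forall>l\<in>V. k \<le> l" "\<forall>t. k + t * g \<in> V"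
  shows "int ` V = {int k + int j * int g | j. True}"
proof (intro set_eqI iffI)
  fix y assume "y \<in> int ` V"
  then obtain l where l: "l \<in> V" "y = int l"
    by blast
  then have "g dvd l - k"
    using assms(1,2) by (metis of_nat_diff int_dvd_int_iff)
  then obtain j where "l - k = g * j"
    by (auto simp: dvd_def)
  then have "y = int k + int j * int g"
    using l assms(2) by (metis add_diff_inverse_nat mult.commute not_less of_nat_add of_nat_mult)
  then show "y \<in> {int k + int j * int g | j. True}"
    by blast
next
  fix y assume "y \<in> {int k + int j * int g | j. True}"
  then obtain j where "y = int (k + j * g)"
    by auto
  then show "y \<in> int ` V"
    using assms(3) by blast
qed

text \<open>The bound \<open>l\<close> comes from the least element of \<open>V\<close>.\<close>

lemma int_image_eq_progression_from:
  fixes V :: "nat set"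
  assumes "g > 0" "\<forall>l\<in>V. int g dvd (int l - int k)" "g \<le> k" "k - g \<in> V"
    and closed: "\<forall>l\<in>V. l + g \<in> V"
  shows "\<exists>l::int. l < 0 \<and> int ` V = {int k + j * int g | j. j \<ge> l}"
proof -
  define m where "m = (LEAST x. x \<in> V)"
  have m: "m \<in> V" "\<And>x. x \<in> V \<Longrightarrow> m \<le> x"
    unfolding m_def using assms(4) by (auto intro: LeastI Least_le)
  obtain l where l: "int m - int k = int g * l"
    using assms(2) m(1) by (auto simp: dvd_def)
  have "int g * l < 0"
    using l m(2)[OF assms(4)] assms(1,3) by linarith
  then have "l < 0"
    using assms(1) by (simp add: mult_less_0_iff)
  have iter: "m + t * g \<in> V" for t
  proof (induction t)
    case (Suc t)
    then have "m + t * g + g \<in> V"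
      using closed by blast
    then show ?case
      by (simp add: algebra_simps)
  qed (simp add: m(1))
  have "int ` V = {int k + j * int g | j. j \<ge> l}"
  proof (intro set_eqI iffI)
    fix y assume "y \<in> int ` V"
    then obtain x where x: "x \<in> V" "y = int x"
      by blast
    obtain j where j: "int x - int k = int g * j"
      using assms(2) x by (auto simp: dvd_def)
    have "int g * l \<le> int g * j"
      using j l m(2)[OF x(1)] by linarith
    then have "l \<le> j"
      using assms(1) by simp
    moreover have "y = int k + j * int g"
      using x j by (simp add: algebra_simps)
    ultimately show "y \<in> {int k + j * int g | j. j \<ge> l}"
      by blast
  next
    fix y assume "y \<in> {int k + j * int g | j. j \<ge> l}"
    then obtain j where j: "y = int k + j * int g" "j \<ge> l"
      by blast
    then have "y = int (m + nat (j - l) * g)"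
      using l by (simp add: algebra_simps)
    then show "y \<in> int ` V"
      using iter by blast
  qed
  with \<open>l < 0\<close> show ?thesis
    by blast
qed

section \<open>Coefficient lists for \<open>r = n / d\<close>\<close>

locale coprime_fraction =
  fixes n d :: nat and r :: rat
  assumes n_pos: "n > 0" and d_pos: "d > 0" and coprime: "coprime n d"
    and r_eq: "r = of_nat n / of_nat d"
begin

lemma r_mult_d: "r * of_nat d = of_nat n"
  using d_pos by (simp add: r_eq)

lemma r_pos: "r > 0"
  using n_pos d_pos by (simp add: r_eq)

lemma coprime_fraction_inverse: "coprime_fraction d n (inverse r)"
  using n_pos d_pos coprime by unfold_locales (auto simp: r_eq coprime_commute)

text \<open>Clearing denominators, \<open>d\<^sup>N\<close> times an element is an integer congruent to \<open>d\<^sup>N\<close> times the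
  length modulo \<open>n - d\<close>, because \<open>n \<equiv> d\<close>.\<close>

lemma horner_times_power_d:
  "length xs \<le> N \<Longrightarrow> \<exists>z::int. horner r xs * of_nat d ^ N = of_int z \<and>
     (int n - int d) dvd (z - int (sum_list xs) * int d ^ N)"
proof (induction xs arbitrary: N)
  case Nil
  show ?case
    by (intro exI[of _ 0]) simp
next
  case (Cons x xs)
  then obtain M where M: "N = Suc M" "length xs \<le> M"
    by (cases N) auto
  from Cons.IH[OF M(2)] obtain z where z: "horner r xs * of_nat d ^ M = of_int z"
    "(int n - int d) dvd (z - int (sum_list xs) * int d ^ M)"
    by blast
  define z' where "z' = int x * int d ^ N + int n * z"
  have "horner r (x # xs) * of_nat d ^ N
      = of_nat x * of_nat d ^ N + (r * of_nat d) * (horner r xs * of_nat d ^ M)"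
    by (simp add: M algebra_simps)
  also have "\<dots> = of_int z'"
    by (simp add: r_mult_d z z'_def)
  finally have "horner r (x # xs) * of_nat d ^ N = of_int z'" .
  moreover have "z' - int (sum_list (x # xs)) * int d ^ N
      = (int n - int d) * z + int d * (z - int (sum_list xs) * int d ^ M)"
    by (simp add: z'_def M algebra_simps)
  then have "(int n - int d) dvd (z' - int (sum_list (x # xs)) * int d ^ N)"
    using z(2) by simp
  ultimately show ?case
    by blast
qed

lemma coprime_diff_d: "coprime (int n - int d) (int d)"
proof (rule coprimeI)
  fix c assume "c dvd int n - int d" "c dvd int d"
  moreover from this have "c dvd int n"
    by (metis diff_add_cancel dvd_add)
  moreover have "coprime (int n) (int d)"
    using coprime by simp
  ultimately show "is_unit c"
    using coprime_common_divisor by blast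
qed

lemma horner_eq_imp_dvd_sum_list:
  assumes "horner r cs = horner r ds"
  shows "(int n - int d) dvd (int (sum_list cs) - int (sum_list ds))"
proof -
  define N where "N = max (length cs) (length ds)"
  obtain z1 where z1: "horner r cs * of_nat d ^ N = of_int z1"
    "(int n - int d) dvd (z1 - int (sum_list cs) * int d ^ N)"
    using horner_times_power_d[of cs N] N_def by auto
  obtain z2 where z2: "horner r ds * of_nat d ^ N = of_int z2"
    "(int n - int d) dvd (z2 - int (sum_list ds) * int d ^ N)"
    using horner_times_power_d[of ds N] N_def by auto
  have "z1 = z2"
    using z1(1) z2(1) assms by simp
  then have "(int n - int d) dvd ((int (sum_list cs) - int (sum_list ds)) * int d ^ N)"
    using dvd_diff[OF z2(2) z1(2)] by (simp add: algebra_simps)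
  moreover have "coprime (int n - int d) (int d ^ N)"
    using coprime_diff_d by simp
  ultimately show ?thesis
    using coprime_dvd_mult_left_iff by blast
qed

lemma horner_Cons_eq_small_head:
  assumes eq: "horner r (a # A) = horner r (b # B)" and "a < n"
  obtains k where "b = a + n * k" "horner r A = of_nat (d * k) + horner r B"
proof -
  define N where "N = max (length A) (length B)"
  obtain z1 where z1: "horner r A * of_nat d ^ N = of_int z1"
    using horner_times_power_d[of A N] N_def by auto
  obtain z2 where z2: "horner r B * of_nat d ^ N = of_int z2"
    using horner_times_power_d[of B N] N_def by auto
  have "of_nat a * of_nat d ^ Suc N + (r * of_nat d) * (horner r A * of_nat d ^ N)
      = of_nat b * of_nat d ^ Suc N + (r * of_nat d) * (horner r B * of_nat d ^ N)"
    using arg_cong[OF eq, of "\<lambda>x. x * of_nat d ^ Suc N"] by (simp add: algebra_simps)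
  then have "of_int ((int b - int a) * int d ^ Suc N) = (of_int (int n * (z1 - z2)) :: rat)"
    by (simp add: r_mult_d z1 z2 algebra_simps)
  then have "int n dvd (int b - int a) * int d ^ Suc N"
    by (metis dvd_triv_left of_int_eq_iff)
  moreover have "coprime (int n) (int d ^ Suc N)"
    using coprime by simp
  ultimately have "int n dvd int b - int a"
    using coprime_dvd_mult_left_iff by blast
  then obtain k where k: "int b - int a = int n * k"
    by (auto simp: dvd_def)
  have "k \<ge> 0"
  proof (rule ccontr)
    assume "\<not> k \<ge> 0"
    then have "int n * k \<le> int n * (-1)"
      by (intro mult_left_mono) auto
    with k \<open>a < n\<close> show False
      by simp
  qed
  then obtain j where j: "k = int j"
    using nonneg_int_cases by blast
  then have "int b = int (a + n * j)"
    using k by simp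
  then have b: "b = a + n * j"
    by (simp only: of_nat_eq_iff)
  then have "r * horner r A = r * (of_nat (d * j) + horner r B)"
    using eq by (simp add: algebra_simps flip: r_mult_d)
  then have "horner r A = of_nat (d * j) + horner r B"
    using r_pos by simp
  with b show ?thesis
    by (rule that)
qed

fun add_head :: "nat \<Rightarrow> nat list \<Rightarrow> nat list" where
  "add_head m [] = [m]"
| "add_head m (b # bs) = (b + m) # bs"

lemma horner_add_head: "horner r (add_head m bs) = of_nat m + horner r bs"
  by (cases bs) auto

lemma sum_list_add_head: "sum_list (add_head m bs) = m + sum_list bs"
  by (cases bs) auto

lemma hd_add_head: "add_head m bs \<noteq> [] \<and> m \<le> hd (add_head m bs)"
  by (cases bs) auto

text \<open>The conclusion about heads strengthens the induction hypothesis.\<close>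

lemma small_coeffs_unique:
  assumes "m \<le> n" "m \<le> d"
  shows "\<forall>x\<in>set as. x < m \<Longrightarrow> horner r as = horner r bs \<Longrightarrow>
     sum_list as = sum_list bs \<and> (as \<noteq> [] \<longrightarrow> bs \<noteq> [] \<longrightarrow> hd as = hd bs)"
proof (induction as arbitrary: bs)
  case Nil
  then show ?case
    using horner_eq_0_iff[OF r_pos, of bs] by simp
next
  case (Cons a A)
  show ?case
  proof (cases bs)
    case Nil
    then show ?thesis
      using horner_eq_0_iff[OF r_pos, of "a # A"] Cons.prems by simp
  next
    case (Cons b B)
    moreover have "a < n"
      using Cons.prems assms by auto
    ultimately obtain k where k: "b = a + n * k" "horner r A = horner r (add_head (d * k) B)"
      using horner_Cons_eq_small_head Cons.prems(2) by (metis horner_add_head)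
    with Cons.IH Cons.prems have IH: "sum_list A = d * k + sum_list B"
      "A \<noteq> [] \<longrightarrow> hd A = hd (add_head (d * k) B)"
      by (auto simp: sum_list_add_head hd_add_head)
    have "k = 0"
    proof (cases "A = []")
      case False
      then have "hd A \<in> set A"
        by simp
      then have "hd A < d"
        using Cons.prems(1) assms by auto
      moreover have "d * k \<le> hd A"
        using IH False hd_add_head by metis
      ultimately show ?thesis
        by (cases k) auto
    qed (use IH d_pos in simp)
    with IH k \<open>bs = b # B\<close> show ?thesis
      by simp
  qed
qed

lemma small_coeffs_sum_list_le:
  assumes "d \<le> n"
  shows "\<forall>x\<in>set as. x < n \<Longrightarrow> horner r as = horner r bs \<Longrightarrow> sum_list as \<le> sum_list bs"
proof (induction as arbitrary: bs)
  case (Cons a A)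
  show ?case
  proof (cases bs)
    case Nil
    then show ?thesis
      using horner_eq_0_iff[OF r_pos, of "a # A"] Cons.prems by simp
  next
    case (Cons b B)
    with Cons.prems obtain k where k: "b = a + n * k" "horner r A = horner r (add_head (d * k) B)"
      using horner_Cons_eq_small_head by (metis horner_add_head list.set_intros(1))
    have "sum_list A \<le> d * k + sum_list B"
      using Cons.IH[OF _ k(2)] Cons.prems(1) by (simp add: sum_list_add_head)
    moreover have "d * k \<le> n * k"
      using assms by simp
    moreover have "sum_list bs = a + n * k + sum_list B"
      using k(1) \<open>bs = b # B\<close> by simp
    ultimately show ?thesis
      by (simp only: sum_list.Cons)
  qed
qed simp

lemma horner_trade:
  assumes "d \<le> h"
  shows "horner r ((c + n) # (h - d) # cs) = horner r (c # h # cs)"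
  using assms r_mult_d by (simp add: of_nat_diff algebra_simps flip: r_mult_d)

lemma ex_coeffs_after_trades:
  assumes "d \<le> n" "d \<le> k"
  shows "\<exists>ds. horner r ds = r ^ t * of_nat k \<and> sum_list ds = k + t * (n - d) \<and>
    ds \<noteq> [] \<and> d \<le> hd ds"
proof (induction t)
  case 0
  show ?case
    using assms by (intro exI[of _ "[k]"]) simp
next
  case (Suc t)
  then obtain h ds where ds: "horner r (h # ds) = r ^ t * of_nat k"
    "sum_list (h # ds) = k + t * (n - d)" "d \<le> h"
    by (metis hd_Cons_tl)
  have "horner r ((0 + n) # (h - d) # ds) = r ^ Suc t * of_nat k"
    using ds by (simp only: horner_trade) simp
  moreover have "sum_list ((0 + n) # (h - d) # ds) = k + Suc t * (n - d)"
    using ds assms by simp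
  ultimately show ?case
    using assms by (intro exI[of _ "(0 + n) # (h - d) # ds"]) simp
qed

lemma lengths_dvd:
  assumes "l \<in> lengths r k"
  shows "(int n - int d) dvd (int l - int k)"
proof -
  obtain cs ds where "sum_list cs = k" "sum_list ds = l" "horner r cs = horner r ds"
    using assms by (auto simp: lengths_def)
  then have "(int n - int d) dvd (int k - int l)"
    using horner_eq_imp_dvd_sum_list by blast
  then show ?thesis
    by (simp add: dvd_diff_commute)
qed

lemma lengths_eq_singleton:
  assumes "k < n" "k < d"
  shows "lengths r k = {k}"
proof (intro equalityI subsetI)
  fix l assume "l \<in> lengths r k"
  then obtain cs ds where h: "sum_list cs = k" "sum_list ds = l" "horner r cs = horner r ds"
    by (auto simp: lengths_def)
  have "\<forall>x\<in>set cs. x < Suc k"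
    using h(1) member_le_sum_list[of _ cs] by fastforce
  with h show "l \<in> {k}"
    using small_coeffs_unique[of "Suc k" cs ds] assms by simp
qed (simp add: self_in_lengths)

lemma lengths_ge:
  assumes "d \<le> n" "k < n" "l \<in> lengths r k"
  shows "k \<le> l"
proof -
  obtain cs ds where h: "sum_list cs = k" "sum_list ds = l" "horner r cs = horner r ds"
    using assms(3) by (auto simp: lengths_def)
  have "\<forall>x\<in>set cs. x < n"
    using h(1) assms(2) member_le_sum_list[of _ cs] by fastforce
  with h assms(1) show ?thesis
    using small_coeffs_sum_list_le by blast
qed

lemma add_multiple_in_lengths:
  assumes "d \<le> n" "d \<le> k"
  shows "k + t * (n - d) \<in> lengths r k"
proof -
  obtain ds where "horner r ds = r ^ t * of_nat k" "sum_list ds = k + t * (n - d)"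
    using ex_coeffs_after_trades[OF assms] by blast
  moreover have "horner r (replicate t 0 @ [k]) = r ^ t * of_nat k"
    by (simp add: horner_shift)
  ultimately show ?thesis
    unfolding lengths_def by (intro CollectI exI[of _ "replicate t 0 @ [k]"] exI[of _ ds]) simp
qed

lemma sub_in_lengths:
  assumes "d \<le> n" "n \<le> k"
  shows "k - (n - d) \<in> lengths r k"
proof -
  have "horner r [k] = horner r [k - n, d]"
    using assms r_mult_d by (simp add: of_nat_diff)
  then show ?thesis
    using assms unfolding lengths_def by (intro CollectI exI[of _ "[k]"] exI[of _ "[k - n, d]"]) simp
qed

lemma lengths_add_closed:
  assumes "d \<le> n" "d \<le> k" "l \<in> lengths r k"
  shows "l + (n - d) \<in> lengths r k"
proof -
  obtain cs ds where h: "sum_list cs = k" "sum_list ds = l" "horner r cs = horner r ds"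
    using assms(3) by (auto simp: lengths_def)
  show ?thesis
  proof (cases "\<exists>h\<in>set ds. d \<le> h")
    case True
    then obtain us h ys where ds: "ds = us @ h # ys" "d \<le> h"
      by (metis split_list)
    obtain xs c where xs: "0 # us = xs @ [c]"
      by (metis list.distinct(1) rev_exhaust)
    define ds' where "ds' = xs @ (c + n) # (h - d) # ys"
    have "horner r (0 # cs) = horner r ((0 # us) @ h # ys)"
      using h(3) ds by simp
    also have "\<dots> = horner r (xs @ c # h # ys)"
      by (simp add: xs)
    also have "\<dots> = horner r ds'"
      by (simp only: ds'_def horner_append horner_trade[OF ds(2)])
    finally have "horner r (0 # cs) = horner r ds'" .
    moreover have "sum_list ds' = l + (n - d)"
      using arg_cong[OF xs, of sum_list] ds h(2) assms(1) by (simp add: ds'_def)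
    ultimately show ?thesis
      using h(1) unfolding lengths_def by (intro CollectI exI[of _ "0 # cs"] exI[of _ ds']) simp
  next
    case False
    then have "l = k"
      using small_coeffs_unique[of d ds cs] h assms(1) by fastforce
    then show ?thesis
      using add_multiple_in_lengths[OF assms(1,2), of 1] by simp
  qed
qed

lemma lengths_progression:
  assumes "d < n"
  shows "(k < d \<longrightarrow> lengths r k = {k})
    \<and> (d \<le> k \<and> k < n \<longrightarrow> int ` lengths r k = {int k + int j * int (n - d) | j. True})
    \<and> (n \<le> k \<longrightarrow> (\<exists>l::int. l < 0 \<and>
          int ` lengths r k = {int k + j * int (n - d) | j. j \<ge> l}))"
proof (intro conjI impI)
  assume "k < d"
  with assms show "lengths r k = {k}"
    by (simp add: lengths_eq_singleton)
next
  assume "d \<le> k \<and> k < n"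
  with assms show "int ` lengths r k = {int k + int j * int (n - d) | j. True}"
    by (intro int_image_eq_progression)
      (auto simp: of_nat_diff intro: lengths_dvd lengths_ge add_multiple_in_lengths)
next
  assume "n \<le> k"
  with assms show "\<exists>l::int. l < 0 \<and> int ` lengths r k = {int k + j * int (n - d) | j. j \<ge> l}"
    using lengths_dvd sub_in_lengths[of k] lengths_add_closed[of k]
    by (intro int_image_eq_progression_from) (auto simp: of_nat_diff)
qed

lemma atoms_S_eq_powers:
  assumes "2 \<le> n" "2 \<le> d"
  shows "atoms (S r) = range ((^) r)"
proof
  show "atoms (S r) \<subseteq> range ((^) r)"
    using atoms_S_subset_powers[OF r_pos] .
next
  show "range ((^) r) \<subseteq> atoms (S r)"
  proof (rule subsetI, unfold atoms_def, intro CollectI conjI ballI impI)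
    fix a assume "a \<in> range ((^) r)"
    then obtain i where a: "a = r ^ i"
      by blast
    then show "a \<in> S r" "a \<noteq> 0"
      using power_in_S r_pos by auto
    fix b c assume "b \<in> S r" "c \<in> S r" "a = b + c"
    then obtain cs1 cs2 where bc: "b = horner r cs1" "c = horner r cs2"
      by (auto simp: S_eq_range_horner)
    obtain cs where cs: "horner r cs = b + c" "sum_list cs = sum_list cs1 + sum_list cs2"
      using ex_coeffs_of_exponents[of r "exponents cs1 @ exponents cs2"]
      by (auto simp: bc sum_list_power_exponents length_exponents)
    have "horner r (replicate i 0 @ [1]) = horner r cs"
      using a cs \<open>a = b + c\<close> by (simp add: horner_shift)
    then have "sum_list cs = 1"
      using small_coeffs_unique[of 2 "replicate i 0 @ [1]" cs] assms by (simp add: sum_list_replicate)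
    then have "sum_list cs1 = 0 \<or> sum_list cs2 = 0"
      using cs(2) by arith
    then show "b = 0 \<or> c = 0"
      using bc horner_eq_0_iff[OF r_pos] by blast
  qed
qed

lemma two_le_num_den:
  assumes "r \<notin> \<nat>" "atomic (S r)"
  shows "2 \<le> n" "2 \<le> d"
proof -
  have "d \<noteq> 1"
    using assms(1) r_eq by auto
  then show "2 \<le> d"
    using d_pos by simp
  then show "2 \<le> n"
    using not_atomic_S_unit_fraction[of d] assms(2) n_pos r_eq by (cases "n = 1") auto
qed

end

lemma coprime_fraction_quotient_of:
  assumes "r > 0"
  obtains n d where "coprime_fraction n d r" "numr r = int n" "denr r = int d"
proof -
  obtain a b where q: "quotient_of r = (a, b)"
    by (cases "quotient_of r")
  have "b > 0" "coprime a b" "r = of_int a / of_int b"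
    using quotient_of_denom_pos[OF q] quotient_of_coprime[OF q] quotient_of_div[OF q] .
  moreover from this have "a > 0"
    using assms by (simp add: zero_less_divide_iff)
  ultimately obtain n d where "a = int n" "b = int d" "n > 0" "d > 0" "coprime n d"
    "r = of_nat n / of_nat d"
    by (metis of_int_of_nat_eq coprime_int_iff pos_int_cases)
  moreover from this have "coprime_fraction n d r"
    by unfold_locales
  ultimately show ?thesis
    using q by (intro that[of n d]) (simp_all add: numr_def denr_def)
qed

theorem proposition4p9:
  fixes r :: rat and k :: nat
  assumes "r > 0" and "atomic (S r)" and "k \<ge> 1"
  shows
   "(r < 1 \<longrightarrow>
       (int k < numr r \<longrightarrow> U k (S r) = {k})
     \<and> (numr r \<le> int k \<and> int k < denr r \<longrightarrow>
          int ` U k (S r) = {int k + int j * (denr r - numr r) | j :: nat. True})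
     \<and> (int k \<ge> denr r \<longrightarrow> (\<exists>l :: int. l < 0 \<and>
          int ` U k (S r) = {int k + j * (denr r - numr r) | j :: int. j \<ge> l})))
  \<and> (r > 1 \<and> r \<notin> \<nat> \<longrightarrow>
       (int k < denr r \<longrightarrow> U k (S r) = {k})
     \<and> (denr r \<le> int k \<and> int k < numr r \<longrightarrow>
          int ` U k (S r) = {int k + int j * (numr r - denr r) | j :: nat. True})
     \<and> (int k \<ge> numr r \<longrightarrow> (\<exists>l :: int. l < 0 \<and>
          int ` U k (S r) = {int k + j * (numr r - denr r) | j :: int. j \<ge> l})))
  \<and> (r \<in> \<nat> \<longrightarrow> U k (S r) = {k})"
proof -
  obtain n d where fraction: "coprime_fraction n d r" and num: "numr r = int n"
    and den: "denr r = int d"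
    using coprime_fraction_quotient_of[OF assms(1)] .
  interpret coprime_fraction n d r
    by (fact fraction)
  interpret inv: coprime_fraction d n "inverse r"
    by (rule coprime_fraction_inverse)
  show ?thesis
  proof (cases "r \<in> \<nat>")
    case True
    then have "\<not> r < 1"
      using assms(1) by (auto elim!: Nats_cases)
    with True show ?thesis
      using U_S_Nats assms(3) by blast
  next
    case False
    then have "2 \<le> n" "2 \<le> d"
      using two_le_num_den assms(2) by auto
    then have "n \<noteq> d"
      using coprime by auto
    have U: "U k (S r) = lengths r k"
      using U_eq_lengths[OF r_pos atoms_S_eq_powers assms(3)] \<open>2 \<le> n\<close> \<open>2 \<le> d\<close> by simp
    have "r < 1 \<longleftrightarrow> n < d" "1 < r \<longleftrightarrow> d < n"
      using d_pos by (simp_all add: r_eq divide_less_eq less_divide_eq)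
    moreover note lengths_progression[of k]
      inv.lengths_progression[of k, unfolded lengths_inverse[OF r_pos[THEN less_imp_neq, symmetric]]]
    ultimately show ?thesis
      using False \<open>n \<noteq> d\<close> unfolding U num den by (auto simp: of_nat_diff)
  qed
qed

end
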